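(* Let $(\Re, S, V)$ be a $V$-complete vector $S$-metric space, where $V$ is Archimedean. Let $K:\Re\to\Re$ be a continuous map and let $f:\Re\to\Re$ be a map commuting with $K$ (i.e. $fK=Kf$). Suppose: (a) $f(\Re)\subseteq K(\Re)$; (b) there is a constant $q\in[0,\tfrac13)$ such that for all $x,y\in\Re$, \[ S(fx,fx,fy)\preceq q\,U(x,x,y) \] for some \[ U(x,x,y)\in\{S(Kx,Kx,Ky),\ S(Kx,Kx,fx),\ S(Ky,Ky,fy),\ S(Kx,Kx,fy),\ S(Ky,Ky,fx)\}; \] (c) $K(\Re)$ or $f(\Re)$ is $V$-complete as a subspace of $\Re$. Then $K$ and $f$ have a unique common fixed point.
   Context: A vector lattice (Riesz space) $V$ is a real vector space with a partial order $\preceq$ compatible with the linear structure ($p_1 \preceq p_2 \Rightarrow p_1+p_3 \preceq p_2+p_3$ and $\omega p_1 \preceq \omega p_2$ for real $\omega>0$) in which every two-element set has a supremum and an infimum. $V$ is Archimedean if $\inf\{\tfrac{1}{m}v : m \in \mathbb{N}\} = 0$ for every $v \in V^+=\{v\in V: v\succeq 0\}$. For a sequence $(\mu_n)$ in $V$, $\mu_n \downarrow 0$ means $(\mu_n)$ is decreasing with $\inf_n \mu_n = 0$. A vector $S$-metric on a nonempty set $\Re$ is a map $S:\Re\times\Re\times\Re\to V$ such that for all $x,y,z,a\in\Re$: (a) $S(x,y,z)\succeq 0$; (b) $S(x,y,z)=0$ iff $x=y=z$; (c) $S(x,y,z)\preceq S(x,y,a)+S(y,y,a)+S(z,z,a)$.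 The triple $(\Re,S,V)$ is a vector $S$-metric space. A sequence $(x_n)$ in $\Re$ $V$-converges to $x\in\Re$ (written $x_n \xrightarrow{S,V} x$) if there is a sequence $(\mu_n)$ in $V$ with $\mu_n\downarrow 0$ and $S(x_n,x_n,x)\preceq \mu_n$ for all $n$. It is $V$-Cauchy if there is $(\mu_n)$ in $V$ with $\mu_n\downarrow 0$ and $S(x_n,x_n,x_{n+q})\preceq\mu_n$ for all $n$ and all $q$. The space (or a subset of it) is $V$-complete if every $V$-Cauchy sequence in it $V$-converges to a limit in it. A map $K:\Re\to\Re$ is continuous if $x_n\xrightarrow{S,V}x$ implies $Kx_n\xrightarrow{S,V}Kx$. *)

theory Defs
  imports "HOL-Analysis.Analysis"
begin

text \<open>Vector lattices (Riesz spaces) are modelled by the type class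
  constraint {ordered_real_vector, lattice}.\<close>

definition is_infimum :: "'v::order set \<Rightarrow> 'v \<Rightarrow> bool" where
  "is_infimum A x \<longleftrightarrow> (\<forall>a\<in>A. x \<le> a) \<and> (\<forall>y. (\<forall>a\<in>A. y \<le> a) \<longrightarrow> y \<le> x)"

definition archimedean_vl :: "'v::{ordered_real_vector, lattice} itself \<Rightarrow> bool" where
  "archimedean_vl _ \<longleftrightarrow>
     (\<forall>v::'v. 0 \<le> v \<longrightarrow> is_infimum {(1 / real m) *\<^sub>R v | m. m \<ge> 1} 0)"

definition decr_to_zero :: "(nat \<Rightarrow> 'v::{ordered_real_vector, lattice}) \<Rightarrow> bool" where
  "decr_to_zero \<mu> \<longleftrightarrow> (\<forall>n. \<mu> (Suc n) \<le> \<mu> n) \<and> is_infimum (range \<mu>) 0"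

definition vector_S_metric :: "('a \<Rightarrow> 'a \<Rightarrow> 'a \<Rightarrow> 'v::{ordered_real_vector, lattice}) \<Rightarrow> bool" where
  "vector_S_metric S \<longleftrightarrow>
     (\<forall>x y z. 0 \<le> S x y z) \<and>
     (\<forall>x y z. S x y z = 0 \<longleftrightarrow> x = y \<and> y = z) \<and>
     (\<forall>x y z a. S x y z \<le> S x y a + S y y a + S z z a)"

definition V_converges ::
  "('a \<Rightarrow> 'a \<Rightarrow> 'a \<Rightarrow> 'v::{ordered_real_vector, lattice}) \<Rightarrow> (nat \<Rightarrow> 'a) \<Rightarrow> 'a \<Rightarrow> bool" where
  "V_converges S xs x \<longleftrightarrow> (\<exists>\<mu>. decr_to_zero \<mu> \<and> (\<forall>n. S (xs n) (xs n) x \<le> \<mu> n))"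

definition V_Cauchy ::
  "('a \<Rightarrow> 'a \<Rightarrow> 'a \<Rightarrow> 'v::{ordered_real_vector, lattice}) \<Rightarrow> (nat \<Rightarrow> 'a) \<Rightarrow> bool" where
  "V_Cauchy S xs \<longleftrightarrow> (\<exists>\<mu>. decr_to_zero \<mu> \<and> (\<forall>n q. S (xs n) (xs n) (xs (n + q)) \<le> \<mu> n))"

definition V_complete_on ::
  "('a \<Rightarrow> 'a \<Rightarrow> 'a \<Rightarrow> 'v::{ordered_real_vector, lattice}) \<Rightarrow> 'a set \<Rightarrow> bool" where
  "V_complete_on S A \<longleftrightarrow>
     (\<forall>xs. (\<forall>n. xs n \<in> A) \<longrightarrow> V_Cauchy S xs \<longrightarrow> (\<exists>x\<in>A. V_converges S xs x))"

definition V_continuous ::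
  "('a \<Rightarrow> 'a \<Rightarrow> 'a \<Rightarrow> 'v::{ordered_real_vector, lattice}) \<Rightarrow> ('a \<Rightarrow> 'a) \<Rightarrow> bool" where
  "V_continuous S K \<longleftrightarrow>
     (\<forall>xs x. V_converges S xs x \<longrightarrow> V_converges S (\<lambda>n. K (xs n)) (K x))"

end

theory Submission imports Defs begin

text \<open>Since \<open>f(\<Re>) \<subseteq> K(\<Re>)\<close> there is a Jungck sequence \<open>K x\<^sub>n\<^sub>+\<^sub>1 = f x\<^sub>n\<close>. Along it the
  contraction makes consecutive distances of \<open>y\<^sub>n = f x\<^sub>n\<close> shrink by the factor \<open>2q/(1-q) < 1\<close>,
  so \<open>(y\<^sub>n)\<close> is \<open>V\<close>-Cauchy (the Archimedean property turns the geometric bounds into a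
  sequence decreasing to 0) and converges to some \<open>z\<close>. Pushing the limit through the continuous
  \<open>K\<close> and using \<open>fK = Kf\<close>, the contraction at the pair \<open>(K x\<^sub>n\<^sub>+\<^sub>1, z)\<close> bounds \<open>S(Kz,Kz,fz)\<close> by
  a fixed multiple of the convergence bounds, so \<open>Kz = fz\<close>. Finally, for two coincidence points
  \<open>u, v\<close> the contraction reads \<open>S(fu,fu,fv) \<le> q S(fu,fu,fv)\<close>, so \<open>fu = fv\<close>; as \<open>fz\<close> is again
  a coincidence point, it is the unique common fixed point.\<close>

lemma le_scaleR_of_le_add_scaleR_self:
  fixes x y :: "'v::ordered_real_vector"
  assumes "x \<le> a *\<^sub>R y + b *\<^sub>R x" "b < 1"
  shows "x \<le> (a / (1 - b)) *\<^sub>R y"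
proof -
  have "(1 - b) *\<^sub>R x \<le> a *\<^sub>R y"
    using assms(1) by (simp add: scaleR_diff_left algebra_simps)
  then have "x \<le> (a *\<^sub>R y) /\<^sub>R (1 - b)"
    using pos_le_divideR_eq[of "1 - b" x "a *\<^sub>R y"] assms(2) by simp
  then show ?thesis by (simp add: divide_inverse mult.commute)
qed

lemma nonpos_if_le_scaled_decr_to_zero:
  assumes "decr_to_zero \<mu>" "0 < c" "\<And>n. x \<le> c *\<^sub>R \<mu> n"
  shows "x \<le> 0"
proof -
  have "(1 / c) *\<^sub>R x \<le> \<mu> n" for n
    using scaleR_left_mono[OF assms(3)[of n], of "1 / c"] assms(2) by simp
  then have "(1 / c) *\<^sub>R x \<le> 0"
    using assms(1) unfolding decr_to_zero_def is_infimum_def by blast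
  then show ?thesis
    using scaleR_left_mono[of "(1 / c) *\<^sub>R x" 0 c] assms(2) by simp
qed

lemma decr_to_zero_geometric:
  fixes v :: "'v::{ordered_real_vector, lattice}"
  assumes arch: "archimedean_vl TYPE('v)" and "0 \<le> v" "0 \<le> c" "0 \<le> r" "r < 1"
  shows "decr_to_zero (\<lambda>n. (c * r ^ n) *\<^sub>R v)"
  unfolding decr_to_zero_def is_infimum_def
proof (intro conjI allI ballI impI)
  fix n
  show "(c * r ^ Suc n) *\<^sub>R v \<le> (c * r ^ n) *\<^sub>R v"
    using assms power_decreasing[of n "Suc n" r] by (intro scaleR_right_mono mult_left_mono) auto
next
  fix a assume "a \<in> range (\<lambda>n. (c * r ^ n) *\<^sub>R v)"
  then show "0 \<le> a" using assms by (auto intro!: scaleR_nonneg_nonneg)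
next
  fix y assume lower: "\<forall>a\<in>range (\<lambda>n. (c * r ^ n) *\<^sub>R v). y \<le> a"
  have "y \<le> (1 / real m) *\<^sub>R v" if "m \<ge> 1" for m
  proof -
    have "(\<lambda>n. c * r ^ n) \<longlonglongrightarrow> 0"
      using tendsto_mult[OF tendsto_const LIMSEQ_power_zero[of r]] assms by simp
    moreover have "0 < 1 / real m" using that by simp
    ultimately obtain n where "c * r ^ n < 1 / real m"
      by (metis order_tendstoD(2) eventually_sequentially order_refl)
    then have "(c * r ^ n) *\<^sub>R v \<le> (1 / real m) *\<^sub>R v"
      using assms by (intro scaleR_right_mono) auto
    with lower show ?thesis by (blast intro: order_trans)
  qed
  then show "y \<le> 0"
    using arch \<open>0 \<le> v\<close> unfolding archimedean_vl_def is_infimum_def by blast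
qed

locale vector_S_metric_space =
  fixes S :: "'a \<Rightarrow> 'a \<Rightarrow> 'a \<Rightarrow> 'v::{ordered_real_vector, lattice}"
  assumes S_metric: "vector_S_metric S"
begin

lemma nonneg: "0 \<le> S x y z"
  using S_metric unfolding vector_S_metric_def by simp

lemma eq_0_iff: "S x y z = 0 \<longleftrightarrow> x = y \<and> y = z"
  using S_metric unfolding vector_S_metric_def by simp

lemma self [simp]: "S x x x = 0"
  by (simp add: eq_0_iff)

lemma commute: "S x x y = S y y x"
proof -
  have le: "S x x y \<le> S y y x" for x y
  proof -
    have "S x x y \<le> S x x x + S x x x + S y y x"
      using S_metric unfolding vector_S_metric_def by blast
    then show ?thesis by simp
  qed
  show ?thesis using le[of x y] le[of y x] by (rule antisym)
qed

lemma triangle: "S x x z \<le> S x x a + S x x a + S a a z"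
  using S_metric commute[of z a] unfolding vector_S_metric_def by metis

lemma V_Cauchy_of_geometric_steps:
  assumes arch: "archimedean_vl TYPE('v)" and "0 \<le> r" "r < 1"
    and step: "\<And>n. S (y (Suc n)) (y (Suc n)) (y (Suc (Suc n))) \<le> r *\<^sub>R S (y n) (y n) (y (Suc n))"
  shows "V_Cauchy S y"
proof -
  define d where "d n = S (y n) (y n) (y (Suc n))" for n
  have d_geometric: "d n \<le> (r ^ n) *\<^sub>R d 0" for n
  proof (induction n)
    case (Suc n)
    have "d (Suc n) \<le> r *\<^sub>R d n" using step by (simp add: d_def)
    also have "\<dots> \<le> r *\<^sub>R ((r ^ n) *\<^sub>R d 0)" by (rule scaleR_left_mono[OF Suc \<open>0 \<le> r\<close>])
    finally show ?case by simp
  qed simp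
  have partial: "S (y n) (y n) (y (n + m)) \<le> (2 * r ^ n * (1 - r ^ m) / (1 - r)) *\<^sub>R d 0" for m n
  proof (induction m arbitrary: n)
    case (Suc m)
    have "S (y n) (y n) (y (n + Suc m)) \<le> d n + d n + S (y (Suc n)) (y (Suc n)) (y (Suc n + m))"
      using triangle[of "y n" "y (n + Suc m)" "y (Suc n)"] by (simp add: d_def)
    also have "\<dots> \<le> (r ^ n) *\<^sub>R d 0 + (r ^ n) *\<^sub>R d 0
                     + (2 * r ^ Suc n * (1 - r ^ m) / (1 - r)) *\<^sub>R d 0"
      by (intro add_mono d_geometric Suc)
    also have "\<dots> = (2 * r ^ n * (1 - r ^ Suc m) / (1 - r)) *\<^sub>R d 0"
      using \<open>r < 1\<close> by (simp add: scaleR_add_left[symmetric] field_simps)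
    finally show ?case .
  qed simp
  have "S (y n) (y n) (y (n + m)) \<le> (2 / (1 - r) * r ^ n) *\<^sub>R d 0" for m n
  proof -
    have "r ^ n * (1 - r ^ m) \<le> r ^ n"
      using assms(2,3) by (intro mult_left_le) (auto simp: power_le_one)
    then have "2 * r ^ n * (1 - r ^ m) / (1 - r) \<le> 2 / (1 - r) * r ^ n"
      using assms(3) by (simp add: divide_right_mono)
    then show ?thesis
      by (intro order_trans[OF partial scaleR_right_mono]) (auto simp: d_def nonneg)
  qed
  moreover have "decr_to_zero (\<lambda>n. (2 / (1 - r) * r ^ n) *\<^sub>R d 0)"
    using assms(2,3) by (intro decr_to_zero_geometric[OF arch]) (auto simp: d_def nonneg)
  ultimately show ?thesis unfolding V_Cauchy_def by blast
qed

end

lemma jungck_sequence_exists: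
  assumes "range f \<subseteq> range K"
  obtains xs where "\<And>n. K (xs (Suc n)) = f (xs n)"
proof -
  have "\<forall>x. \<exists>y. K y = f x"
    using assms by (metis image_iff rangeI subset_eq)
  then obtain g where g: "\<And>x. K (g x) = f x" by metis
  show ?thesis
    by (rule that[of "\<lambda>n. (g ^^ n) undefined"]) (simp add: g)
qed

locale jungck_contraction = vector_S_metric_space S
  for S :: "'a \<Rightarrow> 'a \<Rightarrow> 'a \<Rightarrow> 'v::{ordered_real_vector, lattice}" +
  fixes K f :: "'a \<Rightarrow> 'a" and q :: real
  assumes q_nonneg: "0 \<le> q" and q_less_1: "q < 1"
    and contraction: "\<And>x y. \<exists>U \<in> {S (K x) (K x) (K y), S (K x) (K x) (f x), S (K y) (K y) (f y),
                                 S (K x) (K x) (f y), S (K y) (K y) (f x)}.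
                        S (f x) (f x) (f y) \<le> q *\<^sub>R U"
begin

lemma contraction_le:
  assumes "S (K x) (K x) (K y) \<le> B" "S (K x) (K x) (f x) \<le> B" "S (K y) (K y) (f y) \<le> B"
    "S (K x) (K x) (f y) \<le> B" "S (K y) (K y) (f x) \<le> B"
  shows "S (f x) (f x) (f y) \<le> q *\<^sub>R B"
proof -
  obtain U where "U \<in> {S (K x) (K x) (K y), S (K x) (K x) (f x), S (K y) (K y) (f y),
                        S (K x) (K x) (f y), S (K y) (K y) (f x)}"
    and le_U: "S (f x) (f x) (f y) \<le> q *\<^sub>R U"
    using contraction by blast
  then have "U \<le> B" using assms by auto
  then have "q *\<^sub>R U \<le> q *\<^sub>R B" by (rule scaleR_left_mono[OF _ q_nonneg])
  with le_U show ?thesis by (rule order_trans)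
qed

lemma jungck_step:
  assumes "K x' = f x"
  shows "S (f x) (f x) (f x') \<le> (2 * q / (1 - q)) *\<^sub>R S (K x) (K x) (f x)"
proof -
  define d d' where "d = S (K x) (K x) (f x)" and "d' = S (f x) (f x) (f x')"
  have d: "0 \<le> d" and d': "0 \<le> d'" by (simp_all add: d_def d'_def nonneg)
  have B: "0 \<le> d + d + d'" "d \<le> d + d + d'" "d' \<le> d + d + d'"
    using d d' by (simp_all add: add_nonneg_nonneg add_increasing2 add_increasing)
  have "d' \<le> q *\<^sub>R (d + d + d')"
    unfolding d'_def
  proof (rule contraction_le)
    show "S (K x) (K x) (f x') \<le> d + d + S (f x) (f x) (f x')"
      unfolding d_def by (rule triangle)
  qed (use B in \<open>simp_all only: assms d_def[symmetric] d'_def[symmetric] self\<close>)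
  also have "q *\<^sub>R (d + d + d') = (2 * q) *\<^sub>R d + q *\<^sub>R d'"
    by (simp add: scaleR_add_right scaleR_left_distrib[symmetric])
  finally have "d' \<le> (2 * q) *\<^sub>R d + q *\<^sub>R d'" .
  then show ?thesis
    unfolding d_def d'_def using q_less_1 by (rule le_scaleR_of_le_add_scaleR_self)
qed

lemma coincidence_values_eq:
  assumes "K x = f x" "K y = f y"
  shows "f x = f y"
proof -
  have "S (f x) (f x) (f y) \<le> q *\<^sub>R S (f x) (f x) (f y)"
    using assms by (intro contraction_le) (auto simp: commute nonneg)
  then have "S (f x) (f x) (f y) \<le> (0 / (1 - q)) *\<^sub>R S (f x) (f x) (f y)"
    using q_less_1 by (intro le_scaleR_of_le_add_scaleR_self) auto
  then show ?thesis
    using nonneg[of "f x" "f x" "f y"] by (simp add: eq_0_iff)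
qed

lemma coincidence_estimate:
  assumes "S (K x) (K x) (K y) \<le> m" and "S (f x) (f x) (K y) \<le> m"
  shows "S (K y) (K y) (f y) \<le> (6 * q + 1) *\<^sub>R m + (2 * q) *\<^sub>R S (K y) (K y) (f y)"
proof -
  define D B where "D = S (K y) (K y) (f y)" and "B = D + m + m + m"
  have "0 \<le> D" "0 \<le> m"
    using nonneg order_trans[OF nonneg assms(1)] by (auto simp: D_def)
  then have "m \<le> B" "m + m + m \<le> B" "D \<le> B" "m + m + D \<le> B"
    unfolding B_def by (simp_all add: add_increasing add_increasing2 add.assoc add.left_commute)
  have "S (f x) (f x) (f y) \<le> q *\<^sub>R B"
  proof (rule contraction_le)
    have "S (K x) (K x) (f x) \<le> S (K x) (K x) (K y) + S (K x) (K x) (K y) + S (f x) (f x) (K y)"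
      using triangle commute by metis
    also have "\<dots> \<le> m + m + m" using assms by (intro add_mono)
    finally show "S (K x) (K x) (f x) \<le> B" using \<open>m + m + m \<le> B\<close> by (rule order_trans)
    have "S (K x) (K x) (f y) \<le> m + m + D"
      unfolding D_def using triangle assms(1) by (blast intro: order_trans add_mono)
    then show "S (K x) (K x) (f y) \<le> B" using \<open>m + m + D \<le> B\<close> by (rule order_trans)
  qed (use assms \<open>m \<le> B\<close> \<open>D \<le> B\<close> in \<open>auto simp: D_def commute intro: order_trans\<close>)
  have "D \<le> S (f y) (f y) (f x) + S (f y) (f y) (f x) + S (f x) (f x) (K y)"
    unfolding D_def using triangle commute by metis
  also have "\<dots> \<le> q *\<^sub>R B + q *\<^sub>R B + m"
    using \<open>S (f x) (f x) (f y) \<le> q *\<^sub>R B\<close> assms(2) commute by (intro add_mono) auto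
  also have "\<dots> = (q + q) *\<^sub>R D + (q + q + q + q + q + q + 1) *\<^sub>R m"
    unfolding B_def by (simp only: scaleR_add_right scaleR_add_left scaleR_one add_ac)
  also have "\<dots> = (6 * q + 1) *\<^sub>R m + (2 * q) *\<^sub>R D"
    by (simp add: algebra_simps)
  finally show ?thesis unfolding D_def .
qed

lemma coincidence_of_limit:
  assumes "q < 1/2" and "V_converges S (\<lambda>n. K (p n)) (K z)"
    and shift: "\<And>n. f (p n) = K (p (Suc n))"
  shows "K z = f z"
proof -
  obtain \<mu> where \<mu>: "decr_to_zero \<mu>" and near: "\<And>n. S (K (p n)) (K (p n)) (K z) \<le> \<mu> n"
    using assms(2) unfolding V_converges_def by blast
  have near_shift: "S (f (p n)) (f (p n)) (K z) \<le> \<mu> n" for n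
    using near[of "Suc n"] \<mu> unfolding shift decr_to_zero_def by (blast intro: order_trans)
  have "S (K z) (K z) (f z) \<le> ((6 * q + 1) / (1 - 2 * q)) *\<^sub>R \<mu> n" for n
    using le_scaleR_of_le_add_scaleR_self[OF coincidence_estimate[OF near near_shift]] assms(1)
    by simp
  then have "S (K z) (K z) (f z) \<le> 0"
    using \<mu> q_nonneg assms(1) by (intro nonpos_if_le_scaled_decr_to_zero) auto
  then show ?thesis
    using nonneg[of "K z" "K z" "f z"] by (simp add: eq_0_iff)
qed

lemma unique_common_fixed_point:
  assumes "\<And>x. f (K x) = K (f x)" and "K z = f z"
  shows "\<exists>!w. K w = w \<and> f w = w"
proof -
  have Kfz: "K (f z) = f (f z)"
    using assms by metis
  then have "f (f z) = f z"
    using coincidence_values_eq assms(2) by blast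
  with Kfz have "K (f z) = f z \<and> f (f z) = f z" by simp
  moreover have "w = f z" if "K w = w" "f w = w" for w
    using coincidence_values_eq[of w z] that assms(2) by simp
  ultimately show ?thesis by blast
qed

end

theorem theorem2p2:
  fixes S :: "'a \<Rightarrow> 'a \<Rightarrow> 'a \<Rightarrow> 'v::{ordered_real_vector, lattice}"
    and K f :: "'a \<Rightarrow> 'a"
    and q :: real
  assumes "vector_S_metric S"
    and "V_complete_on S UNIV"
    and "archimedean_vl TYPE('v)"
    and "V_continuous S K"
    and "\<And>x. f (K x) = K (f x)"
    and "range f \<subseteq> range K"
    and "0 \<le> q" and "q < 1/3"
    and "\<And>x y. \<exists>U \<in> {S (K x) (K x) (K y), S (K x) (K x) (f x), S (K y) (K y) (f y),
                         S (K x) (K x) (f y), S (K y) (K y) (f x)}.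
               S (f x) (f x) (f y) \<le> q *\<^sub>R U"
    and "V_complete_on S (range K) \<or> V_complete_on S (range f)"
  shows "\<exists>!z. K z = z \<and> f z = z"
proof -
  interpret jungck_contraction S K f q
    using assms(1,7,8,9) by unfold_locales auto
  obtain xs where xs: "\<And>n. K (xs (Suc n)) = f (xs n)"
    using jungck_sequence_exists[OF assms(6)] by blast
  have "V_Cauchy S (\<lambda>n. f (xs n))"
  proof (rule V_Cauchy_of_geometric_steps[OF assms(3)])
    show "0 \<le> 2 * q / (1 - q)" "2 * q / (1 - q) < 1"
      using assms(7,8) by (auto simp: divide_simps)
  qed (use jungck_step xs in metis)
  then obtain z where "V_converges S (\<lambda>n. f (xs n)) z"
    using assms(2) unfolding V_complete_on_def by blast
  then have "V_converges S (\<lambda>n. K (K (xs (Suc n)))) (K z)"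
    using assms(4) xs unfolding V_continuous_def by simp
  moreover have "f (K (xs (Suc n))) = K (K (xs (Suc (Suc n))))" for n
    using assms(5) xs by metis
  ultimately have "K z = f z"
    using assms(8) by (intro coincidence_of_limit) auto
  then show ?thesis
    using assms(5) by (rule unique_common_fixed_point[rotated])
qed

end
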